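(* Let $\lambda_a,\lambda_b\in\{1,2\}$ and let $u_1,t,u_2$ be integers such that $(u_1,t)$ satisfies $S_{\lambda_a,\lambda_b}$ and $u_1u_2=t^3+t^{\lambda_a}+1$. If $v$ is a divisor of $u_1u_2$ and $t\mid (u_1-v)$, then $(v,t)$ satisfies $S_{\lambda_a,\lambda_b}$, i.e. there is a 4-chain $\langle v,t\rangle_{S_{\lambda_a,\lambda_b}}$ (in which $v,t,u_1u_2/v$ are consecutive terms).
   Context: For $\lambda_a,\lambda_b\in\{1,2\}$, a pair of integers $(x,y)$ satisfies the system $S_{\lambda_a,\lambda_b}$ if $x\mid y^3+y^{\lambda_a}+1$ and $y\mid x^3+x^{\lambda_b}+1$. For a pair $(x,y)$ satisfying $S_{\lambda_a,\lambda_b}$, $\langle x,y\rangle_{S_{\lambda_a,\lambda_b}}$ denotes the bi-infinite integer sequence $(u_n)$ with $u_0=x$, $u_1=y$ and $u_{n-1}u_{n+1}=u_n^3+u_n^{e_n}+1$ for all $n$, where $e_n$ has period 4 with $e_0=\lambda_b$, $e_1=\lambda_a$, $e_2=3-\lambda_b$, $e_3=3-\lambda_a$. *)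

theory Defs
  imports Main
begin

definition satisfiesS :: "nat \<Rightarrow> nat \<Rightarrow> int \<Rightarrow> int \<Rightarrow> bool" where
  "satisfiesS la lb x y \<longleftrightarrow> x dvd y ^ 3 + y ^ la + 1 \<and> y dvd x ^ 3 + x ^ lb + 1"

end

theory Submission
  imports Defs
begin

text \<open>The condition on the pair only involves v modulo t, and v dvd t^3 + t^la + 1 is the
  hypothesis v dvd u1 u2 itself.\<close>

lemma dvd_cube_plus_power_plus_one_cong:
  fixes a b t :: "'a :: euclidean_ring_cancel"
  assumes "t dvd a - b"
  shows "t dvd a ^ 3 + a ^ k + 1 \<longleftrightarrow> t dvd b ^ 3 + b ^ k + 1"
proof -
  have "a mod t = b mod t"
    using assms by (simp add: mod_eq_dvd_iff)
  then have "(a ^ 3 + a ^ k + 1) mod t = (b ^ 3 + b ^ k + 1) mod t"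
    by (metis mod_add_cong power_mod)
  then show ?thesis
    by (simp add: dvd_eq_mod_eq_0)
qed

theorem corollary9:
  fixes la lb :: nat and u1 t u2 v :: int
  assumes "la \<in> {1, 2}" and "lb \<in> {1, 2}"
    and "satisfiesS la lb u1 t"
    and "u1 * u2 = t ^ 3 + t ^ la + 1"
    and "v dvd u1 * u2"
    and "t dvd (u1 - v)"
  shows "satisfiesS la lb v t"
proof -
  have "t dvd u1 ^ 3 + u1 ^ lb + 1"
    using assms(3) by (simp add: satisfiesS_def)
  then have "t dvd v ^ 3 + v ^ lb + 1"
    using dvd_cube_plus_power_plus_one_cong [OF assms(6)] by simp
  moreover have "v dvd t ^ 3 + t ^ la + 1"
    using assms(4,5) by simp
  ultimately show ?thesis
    by (simp add: satisfiesS_def)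
qed

end
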